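(* Let $A=\begin{pmatrix}a&\xi\\\overline\xi&c\end{pmatrix}$ and $B=\begin{pmatrix}1&0\\0&b\end{pmatrix}$ be positive definite ($a,c>0$, $b\ge1$, $|\xi|^2<ac$). Suppose that for some $m\ge0$, $a_j,b_j\in\mathbb{C}$ and $\alpha,\beta>0$ the nonzero function \[ \Phi=\sum_{j=0}^m\begin{pmatrix}a_j\phi^\alpha_j\\ b_j\phi^\beta_j\end{pmatrix} \] is an eigenfunction of $H_{A,B}$. Then either $\xi=0$ or $\alpha=\beta$.
   Context: $H_{A,B}:=B(-\partial_x^2)+Ax^2$ on $L^2(\mathbb{R};\mathbb{C}^2)$, self-adjoint on the domain of pairs of functions in $H^2(\mathbb{R})\cap\{f:\int|x^2f|^2<\infty\}$. For $\alpha>0$, $n\ge0$: $\phi^\alpha_n(x)=\alpha^{1/4}h_n(\alpha^{1/2}x)e^{-\alpha x^2/2}/\sqrt{2^nn!\sqrt\pi}$, where $h_n(x)=(-1)^ne^{x^2}\partial_x^n[e^{-x^2}]$ is the $n$-th Hermite polynomial. *)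

theory Defs
  imports "HOL-Analysis.Analysis"
begin

definition hermite_poly :: "nat \<Rightarrow> real \<Rightarrow> real" where
  "hermite_poly n x = (-1) ^ n * exp (x\<^sup>2) * (((deriv ^^ n) (\<lambda>t. exp (- (t\<^sup>2)))) x)"

definition hermite_fun :: "real \<Rightarrow> nat \<Rightarrow> real \<Rightarrow> real" where
  "hermite_fun \<alpha> n x =
     \<alpha> powr (1/4) * hermite_poly n (sqrt \<alpha> * x) * exp (- \<alpha> * x\<^sup>2 / 2)
       / sqrt (2 ^ n * fact n * sqrt pi)"

definition d2 :: "(real \<Rightarrow> complex) \<Rightarrow> real \<Rightarrow> complex" where
  "d2 f x = vector_derivative (\<lambda>t. vector_derivative f (at t)) (at x)"

text \<open>Action of H_{A,B} = B(-d^2/dx^2) + A x^2 with A = [[a, xi],[conj xi, c]],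
  B = diag(1, b), on a pair (f, g) of (smooth) functions.\<close>
definition H_AB :: "real \<Rightarrow> complex \<Rightarrow> real \<Rightarrow> real \<Rightarrow>
    ((real \<Rightarrow> complex) \<times> (real \<Rightarrow> complex)) \<Rightarrow> ((real \<Rightarrow> complex) \<times> (real \<Rightarrow> complex))" where
  "H_AB a \<xi> c b \<Phi> =
     ((\<lambda>x. - d2 (fst \<Phi>) x + complex_of_real (a * x\<^sup>2) * fst \<Phi> x + \<xi> * complex_of_real (x\<^sup>2) * snd \<Phi> x),
      (\<lambda>x. - complex_of_real b * d2 (snd \<Phi>) x + cnj \<xi> * complex_of_real (x\<^sup>2) * fst \<Phi> x
             + complex_of_real (c * x\<^sup>2) * snd \<Phi> x))"

definition is_eigenfunction_H :: "real \<Rightarrow> complex \<Rightarrow> real \<Rightarrow> real \<Rightarrow>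
    ((real \<Rightarrow> complex) \<times> (real \<Rightarrow> complex)) \<Rightarrow> bool" where
  "is_eigenfunction_H a \<xi> c b \<Phi> \<longleftrightarrow>
     \<Phi> \<noteq> ((\<lambda>_. 0), (\<lambda>_. 0)) \<and>
     (\<exists>E::complex. \<forall>x. fst (H_AB a \<xi> c b \<Phi>) x = E * fst \<Phi> x
                     \<and> snd (H_AB a \<xi> c b \<Phi>) x = E * snd \<Phi> x)"

end

theory Submission
  imports Defs "HOL-Computational_Algebra.Polynomial" "HOL-Real_Asymp.Real_Asymp"
begin

text \<open>Both components of \<open>\<Phi>\<close> are polynomials times Gaussians, \<open>P(x) e^{-\<alpha> x\<^sup>2/2}\<close> and
  \<open>Q(x) e^{-\<beta> x\<^sup>2/2}\<close>, and this form is preserved by differentiation. The coupling term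
  \<open>\<xi> x\<^sup>2\<close> moves one component into the equation of the other. If, say, \<open>\<beta> < \<alpha>\<close>, the first
  eigenvalue equation says that \<open>\<xi> x\<^sup>2 Q(x)\<close> equals a polynomial times \<open>e^{-(\<alpha>-\<beta>) x\<^sup>2/2}\<close>;
  this tends to \<open>0\<close>, which a nonzero polynomial does not, so \<open>\<xi> = 0\<close> or \<open>Q = 0\<close>. In the latter
  case the second equation reduces to \<open>cnj \<xi> x\<^sup>2 P(x) = 0\<close>, so \<open>P = 0\<close> as well and \<open>\<Phi> = 0\<close>.\<close>

fun gauss_deriv_poly :: "nat \<Rightarrow> real poly" where
  "gauss_deriv_poly 0 = 1"
| "gauss_deriv_poly (Suc n) = pderiv (gauss_deriv_poly n) - [:0, 2:] * gauss_deriv_poly n"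

lemma deriv_poly_times_gauss:
  fixes p :: "real poly"
  shows "deriv (\<lambda>t. poly p t * exp (- (t\<^sup>2))) = (\<lambda>t. poly (pderiv p - [:0, 2:] * p) t * exp (- (t\<^sup>2)))"
proof
  fix t :: real
  have "((\<lambda>t. poly p t * exp (- (t\<^sup>2))) has_real_derivative
          poly (pderiv p - [:0, 2:] * p) t * exp (- (t\<^sup>2))) (at t)"
    by (auto intro!: derivative_eq_intros simp: algebra_simps)
  then show "deriv (\<lambda>t. poly p t * exp (- (t\<^sup>2))) t = poly (pderiv p - [:0, 2:] * p) t * exp (- (t\<^sup>2))"
    by (rule DERIV_imp_deriv)
qed

lemma higher_deriv_gauss:
  "(deriv ^^ n) (\<lambda>t. exp (- (t\<^sup>2))) = (\<lambda>t. poly (gauss_deriv_poly n) t * exp (- (t\<^sup>2)))"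
  by (induction n) (simp_all add: deriv_poly_times_gauss)

lemma hermite_poly_altdef: "hermite_poly n y = (-1) ^ n * poly (gauss_deriv_poly n) y"
  unfolding hermite_poly_def higher_deriv_gauss by (simp add: exp_minus field_simps)

definition hermite_fun_poly :: "real \<Rightarrow> nat \<Rightarrow> real poly" where
  "hermite_fun_poly \<alpha> n =
     smult (\<alpha> powr (1/4) * (-1) ^ n / sqrt (2 ^ n * fact n * sqrt pi))
       (pcompose (gauss_deriv_poly n) [:0, sqrt \<alpha>:])"

lemma hermite_fun_altdef: "hermite_fun \<alpha> n x = poly (hermite_fun_poly \<alpha> n) x * exp (- \<alpha> * x\<^sup>2 / 2)"
  unfolding hermite_fun_def hermite_fun_poly_def hermite_poly_altdef
  by (simp add: poly_pcompose mult.commute)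

definition poly_gauss :: "real \<Rightarrow> complex poly \<Rightarrow> complex \<Rightarrow> complex" where
  "poly_gauss \<gamma> P z = poly P z * exp (- of_real \<gamma> * z\<^sup>2 / 2)"

definition gauss_pderiv :: "real \<Rightarrow> complex poly \<Rightarrow> complex poly" where
  "gauss_pderiv \<gamma> P = pderiv P - [:0, of_real \<gamma>:] * P"

lemma poly_gauss_0 [simp]: "poly_gauss \<gamma> 0 z = 0"
  by (simp add: poly_gauss_def)

lemma gauss_pderiv_0 [simp]: "gauss_pderiv \<gamma> 0 = 0"
  by (simp add: gauss_pderiv_def)

lemma poly_gauss_of_real:
  "poly_gauss \<gamma> P (of_real x) = poly P (of_real x) * of_real (exp (- \<gamma> * x\<^sup>2 / 2))"
  unfolding poly_gauss_def by (simp flip: exp_of_real)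

lemma has_field_derivative_poly_gauss:
  "(poly_gauss \<gamma> P has_field_derivative poly_gauss \<gamma> (gauss_pderiv \<gamma> P) z) (at z)"
  unfolding poly_gauss_def gauss_pderiv_def
  by (auto intro!: derivative_eq_intros simp: algebra_simps power2_eq_square)

lemma vector_derivative_poly_gauss:
  "vector_derivative (\<lambda>x. poly_gauss \<gamma> P (of_real x)) (at x) = poly_gauss \<gamma> (gauss_pderiv \<gamma> P) (of_real x)"
  by (intro vector_derivative_at has_vector_derivative_real_field has_field_derivative_poly_gauss)

lemma d2_poly_gauss:
  "d2 (\<lambda>x. poly_gauss \<gamma> P (of_real x)) x = poly_gauss \<gamma> (gauss_pderiv \<gamma> (gauss_pderiv \<gamma> P)) (of_real x)"
  by (simp add: d2_def vector_derivative_poly_gauss)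

lemma poly_map_poly_of_real:
  "poly (map_poly of_real p) (of_real x) = (of_real (poly p x) :: 'a::{real_algebra_1, comm_semiring_0})"
  by (induction p) (auto simp: map_poly_pCons)

lemma sum_hermite_fun_eq_poly_gauss:
  "(\<lambda>x. \<Sum>j\<le>m. c j * complex_of_real (hermite_fun \<alpha> j x)) =
   (\<lambda>x. poly_gauss \<alpha> (\<Sum>j\<le>m. smult (c j) (map_poly of_real (hermite_fun_poly \<alpha> j))) (of_real x))"
  by (auto simp: poly_gauss_of_real hermite_fun_altdef poly_sum poly_map_poly_of_real
      sum_distrib_right mult.assoc)

lemma poly_times_gauss_tendsto_0:
  assumes "\<delta> > 0"
  shows "((\<lambda>x::real. poly R (complex_of_real x) * of_real (exp (- \<delta> * x\<^sup>2))) \<longlongrightarrow> 0) at_top"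
proof -
  have monomial: "((\<lambda>x::real. x ^ i * exp (- \<delta> * x\<^sup>2)) \<longlongrightarrow> 0) at_top" for i
  proof -
    have "((\<lambda>x::real. (x ^ i / exp x) * exp (x - \<delta> * x\<^sup>2)) \<longlongrightarrow> 0 * 0) at_top"
      by (intro tendsto_mult tendsto_power_div_exp_0) (use assms in real_asymp)
    moreover have "(x ^ i / exp x) * exp (x - \<delta> * x\<^sup>2) = x ^ i * exp (- \<delta> * x\<^sup>2)" for x :: real
      by (simp add: exp_diff exp_minus field_simps)
    ultimately show ?thesis by simp
  qed
  have "((\<lambda>x::real. \<Sum>i\<le>degree R. coeff R i * of_real (x ^ i * exp (- \<delta> * x\<^sup>2)))
          \<longlongrightarrow> (\<Sum>i\<le>degree R. coeff R i * 0)) at_top"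
    using tendsto_of_real[OF monomial, where 'a=complex] by (intro tendsto_intros) auto
  moreover have "poly R (complex_of_real x) * of_real (exp (- \<delta> * x\<^sup>2))
      = (\<Sum>i\<le>degree R. coeff R i * of_real (x ^ i * exp (- \<delta> * x\<^sup>2)))" for x
    by (simp add: poly_altdef sum_distrib_right mult.assoc)
  ultimately show ?thesis by simp
qed

lemma poly_tendsto_0_imp_eq_0:
  fixes S :: "'a::real_normed_field poly"
  assumes "((\<lambda>x::real. poly S (of_real x)) \<longlongrightarrow> 0) at_top"
  shows "S = 0"
proof -
  have "((\<lambda>x::real. poly S (of_real x) / of_real x ^ degree S) \<longlongrightarrow> lead_coeff S) at_top"
    by (rule filterlim_compose[OF poly_divide_tendsto_aux filterlim_of_real_at_infinity])
  moreover have "((\<lambda>x::real. poly S (of_real x) / of_real x ^ degree S) \<longlongrightarrow> 0) at_top"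
  proof (rule Lim_null_comparison)
    show "\<forall>\<^sub>F x in at_top. norm (poly S (of_real x) / of_real x ^ degree S) \<le> norm (poly S (of_real x))"
      using eventually_ge_at_top[of "1::real"]
      by eventually_elim (simp add: norm_divide norm_power divide_le_eq mult_le_cancel_left1 one_le_power)
    show "((\<lambda>x. norm (poly S (of_real x))) \<longlongrightarrow> 0) at_top"
      using tendsto_norm_zero[OF assms] .
  qed
  ultimately have "lead_coeff S = 0"
    using tendsto_unique[OF trivial_limit_at_top_linorder] by blast
  then show ?thesis by simp
qed

lemma poly_gauss_slower_decay_eq_0:
  assumes "\<gamma>2 < \<gamma>1" "\<zeta> \<noteq> 0"
    and eq: "\<And>x::real. \<zeta> * of_real (x\<^sup>2) * poly_gauss \<gamma>2 Q (of_real x) = poly_gauss \<gamma>1 R (of_real x)"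
  shows "Q = 0"
proof -
  define \<delta> where "\<delta> = (\<gamma>1 - \<gamma>2) / 2"
  have decay: "poly ([:0, 0, \<zeta>:] * Q) (of_real x) = poly R (of_real x) * of_real (exp (- \<delta> * x\<^sup>2))"
    for x :: real
  proof -
    have split_exp: "exp (- \<gamma>1 * x\<^sup>2 / 2) = exp (- \<gamma>2 * x\<^sup>2 / 2) * exp (- \<delta> * x\<^sup>2)"
      by (simp add: \<delta>_def flip: exp_add) (simp add: field_simps)
    have "(\<zeta> * of_real (x\<^sup>2) * poly Q (of_real x)) * of_real (exp (- \<gamma>2 * x\<^sup>2 / 2))
        = (poly R (of_real x) * of_real (exp (- \<delta> * x\<^sup>2))) * of_real (exp (- \<gamma>2 * x\<^sup>2 / 2))"
      using eq[of x] unfolding poly_gauss_of_real split_exp by (simp add: ac_simps)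
    then show ?thesis
      by (simp add: algebra_simps power2_eq_square)
  qed
  have "\<delta> > 0"
    using assms(1) by (simp add: \<delta>_def)
  then have "((\<lambda>x::real. poly ([:0, 0, \<zeta>:] * Q) (of_real x)) \<longlongrightarrow> 0) at_top"
    unfolding decay by (rule poly_times_gauss_tendsto_0)
  then have "[:0, 0, \<zeta>:] * Q = 0"
    by (rule poly_tendsto_0_imp_eq_0)
  then show ?thesis
    using assms(2) by simp
qed

lemma poly_gauss_times_square_eq_0:
  assumes "\<zeta> \<noteq> 0" and "\<And>x::real. \<zeta> * of_real (x\<^sup>2) * poly_gauss \<gamma> Q (of_real x) = 0"
  shows "Q = 0"
  by (rule poly_gauss_slower_decay_eq_0[of \<gamma> "\<gamma> + 1" \<zeta> Q 0]) (use assms in auto)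

lemma coupled_poly_gauss_eigen_eq_0:
  fixes a c :: real and k l \<zeta> \<eta> E :: complex
  assumes "\<gamma>2 < \<gamma>1" "\<zeta> \<noteq> 0" "\<eta> \<noteq> 0"
    and eq1: "\<And>x::real.
      - k * poly_gauss \<gamma>1 (gauss_pderiv \<gamma>1 (gauss_pderiv \<gamma>1 P)) (of_real x)
      + of_real (a * x\<^sup>2) * poly_gauss \<gamma>1 P (of_real x)
      + \<zeta> * of_real (x\<^sup>2) * poly_gauss \<gamma>2 Q (of_real x) = E * poly_gauss \<gamma>1 P (of_real x)"
    and eq2: "\<And>x::real.
      - l * poly_gauss \<gamma>2 (gauss_pderiv \<gamma>2 (gauss_pderiv \<gamma>2 Q)) (of_real x)
      + \<eta> * of_real (x\<^sup>2) * poly_gauss \<gamma>1 P (of_real x)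
      + of_real (c * x\<^sup>2) * poly_gauss \<gamma>2 Q (of_real x) = E * poly_gauss \<gamma>2 Q (of_real x)"
  shows "P = 0 \<and> Q = 0"
proof -
  define R where "R = smult E P + smult k (gauss_pderiv \<gamma>1 (gauss_pderiv \<gamma>1 P)) - [:0, 0, of_real a:] * P"
  have "\<zeta> * of_real (x\<^sup>2) * poly_gauss \<gamma>2 Q (of_real x) = poly_gauss \<gamma>1 R (of_real x)" for x :: real
    using eq1[of x] by (simp add: R_def poly_gauss_def algebra_simps power2_eq_square)
  then have "Q = 0"
    by (rule poly_gauss_slower_decay_eq_0[OF assms(1,2)])
  moreover from this have "P = 0"
    using assms(3) eq2 by (intro poly_gauss_times_square_eq_0) auto
  ultimately show ?thesis by simp
qed

lemma not_is_eigenfunction_H_poly_gauss: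
  assumes "\<xi> \<noteq> 0" and "\<alpha> \<noteq> \<beta>"
  shows "\<not> is_eigenfunction_H a \<xi> c b (\<lambda>x. poly_gauss \<alpha> P (of_real x), \<lambda>x. poly_gauss \<beta> Q (of_real x))"
proof
  assume eigen: "is_eigenfunction_H a \<xi> c b (\<lambda>x. poly_gauss \<alpha> P (of_real x), \<lambda>x. poly_gauss \<beta> Q (of_real x))"
  then obtain E where eq1: "\<And>x::real.
      - poly_gauss \<alpha> (gauss_pderiv \<alpha> (gauss_pderiv \<alpha> P)) (of_real x)
      + of_real (a * x\<^sup>2) * poly_gauss \<alpha> P (of_real x)
      + \<xi> * of_real (x\<^sup>2) * poly_gauss \<beta> Q (of_real x) = E * poly_gauss \<alpha> P (of_real x)"
    and eq2: "\<And>x::real.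
      - of_real b * poly_gauss \<beta> (gauss_pderiv \<beta> (gauss_pderiv \<beta> Q)) (of_real x)
      + cnj \<xi> * of_real (x\<^sup>2) * poly_gauss \<alpha> P (of_real x)
      + of_real (c * x\<^sup>2) * poly_gauss \<beta> Q (of_real x) = E * poly_gauss \<beta> Q (of_real x)"
    unfolding is_eigenfunction_H_def H_AB_def by (auto simp: d2_poly_gauss)
  have "cnj \<xi> \<noteq> 0"
    using assms(1) by simp
  from assms(2) consider "\<beta> < \<alpha>" | "\<alpha> < \<beta>"
    by linarith
  then have "P = 0 \<and> Q = 0"
  proof cases
    case 1
    show ?thesis
      by (rule coupled_poly_gauss_eigen_eq_0[where k = 1 and l = b, OF 1 assms(1) \<open>cnj \<xi> \<noteq> 0\<close>])
        (use eq1 eq2 in \<open>auto simp: algebra_simps\<close>)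
  next
    case 2
    have "Q = 0 \<and> P = 0"
      by (rule coupled_poly_gauss_eigen_eq_0[where k = b and l = 1, OF 2 \<open>cnj \<xi> \<noteq> 0\<close> assms(1)])
        (use eq1 eq2 in \<open>auto simp: algebra_simps\<close>)
    then show ?thesis by simp
  qed
  then show False
    using eigen by (simp add: is_eigenfunction_H_def)
qed

theorem mainTheorem9:
  fixes a c b \<alpha> \<beta> :: real and \<xi> :: complex and m :: nat
    and aa bb :: "nat \<Rightarrow> complex"
  assumes "a > 0" and "c > 0" and "b \<ge> 1" and "(cmod \<xi>)\<^sup>2 < a * c"
    and "\<alpha> > 0" and "\<beta> > 0"
    and "is_eigenfunction_H a \<xi> c b
           ((\<lambda>x. \<Sum>j\<le>m. aa j * complex_of_real (hermite_fun \<alpha> j x)),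
            (\<lambda>x. \<Sum>j\<le>m. bb j * complex_of_real (hermite_fun \<beta> j x)))"
  shows "\<xi> = 0 \<or> \<alpha> = \<beta>"
  using not_is_eigenfunction_H_poly_gauss assms(7) unfolding sum_hermite_fun_eq_poly_gauss by blast

end
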